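(* Let $1\le m\le N-1$ be integers, let $A\subset\Lambda$ be a measurable set of positive measure, and let $\gamma:A\to(0,\infty)$ be measurable. If $$\rho^{(m+1)}(x_1,\dots,x_{m+1})\ge\gamma(x_{m+1})\,\rho^{(m)}(x_1,\dots,x_m)$$ for a.e. $(x_1,\dots,x_{m+1})\in\Lambda^m\times A$, then $$\rho^{(m)}(x_1,\dots,x_m)\ge\gamma(x_m)\,\rho^{(m-1)}(x_1,\dots,x_{m-1})$$ for a.e. $(x_1,\dots,x_m)\in\Lambda^{m-1}\times A$.
   Context: $(\Lambda;dx)$ is a complete $\sigma$-finite measure space with non-zero measure $dx$; $d^kx$ denotes the completion of $dx^{\otimes k}$ on $\Lambda^k$, and "a.e." refers to these measures. $N\ge2$ and $P$ is a symmetric probability density on $\Lambda^N$: a nonnegative, measurable, symmetric function with $\int_{\Lambda^N}P\,d^Nx=1$. For $1\le m<N$, the marginal density is $\rho^{(m)}(x_1,\dots,x_m):=\int_{\Lambda^{N-m}}P(x_1,\dots,x_m,x_{m+1},\dots,x_N)\,dx_{m+1}\cdots dx_N$ (defined a.e. on $\Lambda^m$). Conventions: $\rho^{(N)}:=P$ and $\rho^{(0)}:=1$. *)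

theory Defs
  imports "HOL-Analysis.Analysis" "HOL-Combinatorics.Permutations"
begin

text \<open>Points of the k-fold product are functions on the index set {..<k}
  (index i corresponds to the paper's x_(i+1)). The measure d^k x is the completion
  of the k-fold product measure.\<close>

definition prodc :: "'a measure \<Rightarrow> nat \<Rightarrow> (nat \<Rightarrow> 'a) measure" where
  "prodc M k = completion (PiM {..<k} (\<lambda>_. M))"

text \<open>Marginal density rho^(m) of P on Lambda^N: integrate out the coordinates m..N-1.
  For m = N this is P itself, for m = 0 it is the total integral of P.\<close>

definition marginal :: "'a measure \<Rightarrow> nat \<Rightarrow> ((nat \<Rightarrow> 'a) \<Rightarrow> real) \<Rightarrow> nat \<Rightarrow> (nat \<Rightarrow> 'a) \<Rightarrow> ennreal" where
  "marginal M N P m x =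
     (\<integral>\<^sup>+ y. ennreal (P (merge {..<m} {m..<N} (x, y))) \<partial>(completion (PiM {m..<N} (\<lambda>_. M))))"

definition sym_prob_density :: "'a measure \<Rightarrow> nat \<Rightarrow> ((nat \<Rightarrow> 'a) \<Rightarrow> real) \<Rightarrow> bool" where
  "sym_prob_density M N P \<longleftrightarrow>
     P \<in> borel_measurable (prodc M N) \<and>
     (\<forall>x \<in> space (prodc M N). 0 \<le> P x) \<and>
     (\<forall>\<sigma> x. \<sigma> permutes {..<N} \<longrightarrow> x \<in> space (prodc M N) \<longrightarrow> P (x \<circ> \<sigma>) = P x) \<and>
     (\<integral>\<^sup>+ x. ennreal (P x) \<partial>(prodc M N)) = 1"

end

theory Submission
  imports Defs
begin

text \<open>Integrating the hypothesis over x_(m+1) turns its left-hand side into rho^(m). Before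
  integrating, the symmetry of P is used to exchange x_m and x_(m+1), so that the weight gamma
  sits at x_m and the right-hand side becomes gamma(x_m) times the integral over x_(m+1) of
  rho^(m)(x_1, ..., x_(m-1), x_(m+1)), which is at least gamma(x_m) rho^(m-1)(x_1, ..., x_(m-1)).
  As P is measurable only for the completed product measure, the first Fubini step is justified
  almost everywhere through a Borel version of P; the second is only needed as an inequality,
  which holds for arbitrary integrands.\<close>

lemma (in product_sigma_finite) distr_PiM_fun_upd:
  assumes "finite I" "i \<notin> I"
  shows "distr (Pi\<^sub>M I M \<Otimes>\<^sub>M M i) (Pi\<^sub>M (insert i I) M) (\<lambda>(f, y). f(i := y)) = Pi\<^sub>M (insert i I) M"
proof (rule PiM_eqI)
  interpret I: finite_product_sigma_finite M I by standard fact
  interpret P: pair_sigma_finite "Pi\<^sub>M I M" "M i" by standard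
  fix A assume A: "\<And>j. j \<in> insert i I \<Longrightarrow> A j \<in> sets (M j)"
  have "(\<lambda>(f, y). f(i := y)) -` Pi\<^sub>E (insert i I) A \<inter> space (Pi\<^sub>M I M \<Otimes>\<^sub>M M i) = Pi\<^sub>E I A \<times> A i"
    using A[THEN sets.sets_into_space] assms(2)
    by (auto simp: space_PiM space_pair_measure PiE_iff extensional_def split: if_splits)
  then have "emeasure (distr (Pi\<^sub>M I M \<Otimes>\<^sub>M M i) (Pi\<^sub>M (insert i I) M) (\<lambda>(f, y). f(i := y)))
      (Pi\<^sub>E (insert i I) A) = emeasure (Pi\<^sub>M I M \<Otimes>\<^sub>M M i) (Pi\<^sub>E I A \<times> A i)"
    using A by (subst emeasure_distr) (auto intro!: sets_PiM_I_finite assms)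
  also have "\<dots> = emeasure (Pi\<^sub>M I M) (Pi\<^sub>E I A) * emeasure (M i) (A i)"
    using A assms(1)
    by (intro sigma_finite_measure.emeasure_pair_measure_Times[OF sigma_finite_measures] sets_PiM_I_finite)
       auto
  also have "\<dots> = (\<Prod>j\<in>insert i I. emeasure (M j) (A j))"
    using A assms by (simp add: I.measure_times mult.commute)
  finally show "emeasure (distr (Pi\<^sub>M I M \<Otimes>\<^sub>M M i) (Pi\<^sub>M (insert i I) M) (\<lambda>(f, y). f(i := y)))
      (Pi\<^sub>E (insert i I) A) = (\<Prod>j\<in>insert i I. emeasure (M j) (A j))" .
qed (use assms in simp_all)

lemma (in product_sigma_finite) AE_PiM_insert_fun_upd:
  assumes "finite I" "i \<notin> I" "AE x in Pi\<^sub>M (insert i I) M. Q x"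
  shows "AE f in Pi\<^sub>M I M. AE y in M i. Q (f(i := y))"
proof -
  interpret I: finite_product_sigma_finite M I by standard fact
  interpret P: pair_sigma_finite "Pi\<^sub>M I M" "M i" by standard
  have "AE x in distr (Pi\<^sub>M I M \<Otimes>\<^sub>M M i) (Pi\<^sub>M (insert i I) M) (\<lambda>(f, y). f(i := y)). Q x"
    by (subst distr_PiM_fun_upd[OF assms(1,2)]) (rule assms(3))
  then have "AE p in Pi\<^sub>M I M \<Otimes>\<^sub>M M i. Q ((fst p)(i := snd p))"
    by (auto dest: AE_distrD[OF measurable_add_dim] simp: case_prod_beta)
  then show ?thesis by (auto dest: P.AE_pair)
qed

lemma (in product_sigma_finite) AE_PiM_merge:
  assumes "I \<inter> J = {}" "finite I" "finite J" "AE x in Pi\<^sub>M (I \<union> J) M. Q x"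
  shows "AE x in Pi\<^sub>M I M. AE y in Pi\<^sub>M J M. Q (merge I J (x, y))"
proof -
  interpret I: finite_product_sigma_finite M I by standard fact
  interpret J: finite_product_sigma_finite M J by standard fact
  interpret P: pair_sigma_finite "Pi\<^sub>M I M" "Pi\<^sub>M J M" by standard
  have "AE x in distr (Pi\<^sub>M I M \<Otimes>\<^sub>M Pi\<^sub>M J M) (Pi\<^sub>M (I \<union> J) M) (merge I J). Q x"
    by (subst distr_merge[OF assms(1-3)]) (rule assms(4))
  then have "AE p in Pi\<^sub>M I M \<Otimes>\<^sub>M Pi\<^sub>M J M. Q (merge I J p)"
    by (rule AE_distrD[OF measurable_merge])
  then show ?thesis by (auto dest: P.AE_pair)
qed

text \<open>The next two inequalities need no measurability of the integrand: the nonnegative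
  integral is a supremum over simple functions below it.\<close>

lemma (in product_sigma_finite) nn_integral_PiM_insert_le:
  assumes "finite I" "i \<notin> I"
  shows "integral\<^sup>N (Pi\<^sub>M (insert i I) M) f \<le> (\<integral>\<^sup>+ y. (\<integral>\<^sup>+ x. f (x(i := y)) \<partial>Pi\<^sub>M I M) \<partial>M i)"
  unfolding nn_integral_def[of "Pi\<^sub>M (insert i I) M" f]
proof (rule SUP_least, clarsimp)
  fix g assume g: "simple_function (Pi\<^sub>M (insert i I) M) g" "g \<le> f"
  have "integral\<^sup>S (Pi\<^sub>M (insert i I) M) g = integral\<^sup>N (Pi\<^sub>M (insert i I) M) g"
    using g by (simp add: nn_integral_eq_simple_integral)
  also have "\<dots> = (\<integral>\<^sup>+ y. (\<integral>\<^sup>+ x. g (x(i := y)) \<partial>Pi\<^sub>M I M) \<partial>M i)"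
    using g assms by (intro product_nn_integral_insert_rev) (auto intro: borel_measurable_simple_function)
  also have "\<dots> \<le> (\<integral>\<^sup>+ y. (\<integral>\<^sup>+ x. f (x(i := y)) \<partial>Pi\<^sub>M I M) \<partial>M i)"
    using g(2) by (intro nn_integral_mono) (auto simp: le_fun_def)
  finally show "integral\<^sup>S (Pi\<^sub>M (insert i I) M) g \<le> (\<integral>\<^sup>+ y. (\<integral>\<^sup>+ x. f (x(i := y)) \<partial>Pi\<^sub>M I M) \<partial>M i)" .
qed

lemma nn_integral_cmult_le: "c * integral\<^sup>N M f \<le> (\<integral>\<^sup>+ x. c * f x \<partial>M)"
  unfolding nn_integral_def[of M f] SUP_mult_left_ennreal
proof (rule SUP_least, clarsimp)
  fix g assume g: "simple_function M g" "g \<le> f"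
  have "c * integral\<^sup>S M g = integral\<^sup>N M (\<lambda>x. c * g x)"
    using g by (simp add: nn_integral_eq_simple_integral)
  also have "\<dots> \<le> (\<integral>\<^sup>+ x. c * f x \<partial>M)"
    using g(2) by (intro nn_integral_mono mult_left_mono) (auto simp: le_fun_def)
  finally show "c * integral\<^sup>S M g \<le> (\<integral>\<^sup>+ x. c * f x \<partial>M)" .
qed

lemma measurable_comp_permutes:
  assumes "\<sigma> permutes I"
  shows "(\<lambda>x. x \<circ> \<sigma>) \<in> measurable (Pi\<^sub>M I (\<lambda>_. M)) (Pi\<^sub>M I (\<lambda>_. M))"
proof -
  have "(\<lambda>x i. x (\<sigma> i)) \<in> measurable (Pi\<^sub>M I (\<lambda>_. M)) (Pi\<^sub>M I (\<lambda>_. M))"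
    using assms
    by (intro measurable_PiM_single')
       (auto simp: permutes_in_image space_PiM PiE_iff extensional_def permutes_not_in)
  then show ?thesis by (simp add: comp_def)
qed

lemma distr_PiM_comp_permutes:
  assumes "sigma_finite_measure M" "finite I" "\<sigma> permutes I"
  shows "distr (Pi\<^sub>M I (\<lambda>_. M)) (Pi\<^sub>M I (\<lambda>_. M)) (\<lambda>x. x \<circ> \<sigma>) = Pi\<^sub>M I (\<lambda>_. M)"
proof -
  interpret product_sigma_finite "\<lambda>_. M"
    using assms(1) by (simp add: product_sigma_finite_def)
  have inv: "inv \<sigma> permutes I"
    using assms(3) by (rule permutes_inv)
  show ?thesis
  proof (rule PiM_eqI[OF assms(2)])
    fix A assume A: "\<And>i. i \<in> I \<Longrightarrow> A i \<in> sets M"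
    have "(\<lambda>x. x \<circ> \<sigma>) -` Pi\<^sub>E I A \<inter> space (Pi\<^sub>M I (\<lambda>_. M)) = Pi\<^sub>E I (\<lambda>j. A (inv \<sigma> j))"
    proof (intro equalityI subsetI)
      fix x assume x: "x \<in> (\<lambda>x. x \<circ> \<sigma>) -` Pi\<^sub>E I A \<inter> space (Pi\<^sub>M I (\<lambda>_. M))"
      have "x (\<sigma> (inv \<sigma> j)) \<in> A (inv \<sigma> j)" if "j \<in> I" for j
        using x that inv by (auto simp: permutes_in_image)
      with x show "x \<in> Pi\<^sub>E I (\<lambda>j. A (inv \<sigma> j))"
        using assms(3) by (auto simp: space_PiM PiE_iff permutes_inverses(1))
    next
      fix x assume x: "x \<in> Pi\<^sub>E I (\<lambda>j. A (inv \<sigma> j))"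
      have "x (\<sigma> i) \<in> A (inv \<sigma> (\<sigma> i))" if "i \<in> I" for i
        using x that assms(3) by (auto simp: permutes_in_image)
      moreover have "x i \<in> space M" if "i \<in> I" for i
        using PiE_mem[OF x that] sets.sets_into_space[OF A[of "inv \<sigma> i"]] inv that
        by (auto simp: permutes_in_image)
      ultimately show "x \<in> (\<lambda>x. x \<circ> \<sigma>) -` Pi\<^sub>E I A \<inter> space (Pi\<^sub>M I (\<lambda>_. M))"
        using x assms(3)
        by (auto simp: space_PiM PiE_iff extensional_def permutes_inverses(2) permutes_not_in)
    qed
    then have "emeasure (distr (Pi\<^sub>M I (\<lambda>_. M)) (Pi\<^sub>M I (\<lambda>_. M)) (\<lambda>x. x \<circ> \<sigma>)) (Pi\<^sub>E I A)
        = (\<Prod>j\<in>I. emeasure M (A (inv \<sigma> j)))"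
      using A assms inv
      by (subst emeasure_distr[OF measurable_comp_permutes])
         (auto simp: emeasure_PiM permutes_in_image intro!: sets_PiM_I_finite)
    also have "\<dots> = (\<Prod>i\<in>I. emeasure M (A i))"
      using prod.reindex_bij_betw[OF permutes_imp_bij[OF inv]] .
    finally show "emeasure (distr (Pi\<^sub>M I (\<lambda>_. M)) (Pi\<^sub>M I (\<lambda>_. M)) (\<lambda>x. x \<circ> \<sigma>)) (Pi\<^sub>E I A)
        = (\<Prod>i\<in>I. emeasure M (A i))" .
  qed simp
qed

lemma AE_PiM_comp_permutes:
  assumes "sigma_finite_measure M" "finite I" "\<sigma> permutes I" "AE x in Pi\<^sub>M I (\<lambda>_. M). Q x"
  shows "AE x in Pi\<^sub>M I (\<lambda>_. M). Q (x \<circ> \<sigma>)"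
proof -
  have "AE x in distr (Pi\<^sub>M I (\<lambda>_. M)) (Pi\<^sub>M I (\<lambda>_. M)) (\<lambda>x. x \<circ> \<sigma>). Q x"
    by (subst distr_PiM_comp_permutes[OF assms(1-3)]) (rule assms(4))
  then show ?thesis
    by (rule AE_distrD[OF measurable_comp_permutes[OF assms(3)]])
qed

lemma marginal_eq_PiM:
  "marginal M N P j x = (\<integral>\<^sup>+ y. ennreal (P (merge {..<j} {j..<N} (x, y))) \<partial>Pi\<^sub>M {j..<N} (\<lambda>_. M))"
  unfolding marginal_def nn_integral_completion ..

lemma merge_fun_upd_shift:
  "j < N \<Longrightarrow> merge {..<j} {j..<N} (x, y(j := s)) = merge {..<Suc j} {Suc j..<N} (x(j := s), y)"
  by (auto simp: merge_def fun_eq_iff)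

lemma marginal_cong_prefix:
  "(\<And>i. i < j \<Longrightarrow> x i = y i) \<Longrightarrow> marginal M N P j x = marginal M N P j y"
  unfolding marginal_def
  by (intro nn_integral_cong arg_cong[where f=ennreal] arg_cong[where f=P]) (auto simp: merge_def fun_eq_iff)

lemma marginal_comp_permutes:
  assumes "sym_prob_density M N P" "j \<le> N" "\<sigma> permutes {..<j}"
    and "x \<in> space (Pi\<^sub>M {..<j} (\<lambda>_. M))"
  shows "marginal M N P j (x \<circ> \<sigma>) = marginal M N P j x"
  unfolding marginal_eq_PiM
proof (rule nn_integral_cong)
  fix y assume y: "y \<in> space (Pi\<^sub>M {j..<N} (\<lambda>_. M))"
  have "\<sigma> i < j" if "i < j" for i
    using permutes_in_image[OF assms(3)] that by simp
  then have "merge {..<j} {j..<N} (x \<circ> \<sigma>, y) = merge {..<j} {j..<N} (x, y) \<circ> \<sigma>"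
    using assms(3) by (auto simp: merge_def fun_eq_iff permutes_not_in)
  moreover have "\<sigma> permutes {..<N}"
    using assms(2,3) by (auto intro: permutes_subset)
  moreover have "merge {..<j} {j..<N} (x, y) \<in> space (prodc M N)"
    using assms(2,4) y by (auto simp: prodc_def space_PiM PiE_iff merge_def extensional_def)
  ultimately show "ennreal (P (merge {..<j} {j..<N} (x \<circ> \<sigma>, y))) = ennreal (P (merge {..<j} {j..<N} (x, y)))"
    using assms(1) by (simp add: sym_prob_density_def)
qed

lemma marginal_le_integral_marginal_Suc:
  assumes "sigma_finite_measure M" "j < N"
  shows "marginal M N P j x \<le> (\<integral>\<^sup>+ s. marginal M N P (Suc j) (x(j := s)) \<partial>M)"
proof -
  interpret product_sigma_finite "\<lambda>_. M"
    using assms(1) by (simp add: product_sigma_finite_def)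
  have ins: "insert j {Suc j..<N} = {j..<N}"
    using assms(2) by auto
  have "marginal M N P j x
      = (\<integral>\<^sup>+ y. ennreal (P (merge {..<j} {j..<N} (x, y))) \<partial>Pi\<^sub>M (insert j {Suc j..<N}) (\<lambda>_. M))"
    by (simp add: marginal_eq_PiM ins)
  also have "\<dots> \<le> (\<integral>\<^sup>+ s. (\<integral>\<^sup>+ y. ennreal (P (merge {..<j} {j..<N} (x, y(j := s))))
      \<partial>Pi\<^sub>M {Suc j..<N} (\<lambda>_. M)) \<partial>M)"
    by (rule nn_integral_PiM_insert_le) auto
  also have "\<dots> = (\<integral>\<^sup>+ s. marginal M N P (Suc j) (x(j := s)) \<partial>M)"
    using assms(2) by (simp add: merge_fun_upd_shift marginal_eq_PiM)
  finally show ?thesis .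
qed

lemma marginal_eq_integral_marginal_Suc:
  assumes "sigma_finite_measure M" "j < N" "P \<in> borel_measurable (Pi\<^sub>M {..<N} (\<lambda>_. M))"
    and "x \<in> space (Pi\<^sub>M {..<j} (\<lambda>_. M))"
  shows "marginal M N P j x = (\<integral>\<^sup>+ s. marginal M N P (Suc j) (x(j := s)) \<partial>M)"
proof -
  interpret product_sigma_finite "\<lambda>_. M"
    using assms(1) by (simp add: product_sigma_finite_def)
  have ins: "insert j {Suc j..<N} = {j..<N}" and un: "{..<j} \<union> {j..<N} = {..<N}"
    using assms(2) by auto
  have "(\<lambda>y. merge {..<j} {j..<N} (x, y)) \<in> measurable (Pi\<^sub>M {j..<N} (\<lambda>_. M)) (Pi\<^sub>M {..<N} (\<lambda>_. M))"
    using measurable_compose[OF measurable_Pair1'[OF assms(4)] measurable_merge[of "{..<j}" "{j..<N}", unfolded un]]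
    by simp
  then have "(\<lambda>y. ennreal (P (merge {..<j} {j..<N} (x, y)))) \<in> borel_measurable (Pi\<^sub>M {j..<N} (\<lambda>_. M))"
    using assms(3) by measurable
  then have "marginal M N P j x = (\<integral>\<^sup>+ s. (\<integral>\<^sup>+ y. ennreal (P (merge {..<j} {j..<N} (x, y(j := s))))
      \<partial>Pi\<^sub>M {Suc j..<N} (\<lambda>_. M)) \<partial>M)"
    unfolding marginal_eq_PiM using product_nn_integral_insert_rev[of "{Suc j..<N}" j, unfolded ins]
    by simp
  then show ?thesis
    using assms(2) by (simp add: merge_fun_upd_shift marginal_eq_PiM)
qed

lemma AE_marginal_cong:
  assumes "sigma_finite_measure M" "j \<le> N" "AE y in Pi\<^sub>M {..<N} (\<lambda>_. M). P y = Q y"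
  shows "AE x in Pi\<^sub>M {..<j} (\<lambda>_. M). marginal M N P j x = marginal M N Q j x"
proof -
  interpret product_sigma_finite "\<lambda>_. M"
    using assms(1) by (simp add: product_sigma_finite_def)
  have un: "{..<j} \<union> {j..<N} = {..<N}"
    using assms(2) by auto
  have "AE x in Pi\<^sub>M {..<j} (\<lambda>_. M). AE y in Pi\<^sub>M {j..<N} (\<lambda>_. M).
      P (merge {..<j} {j..<N} (x, y)) = Q (merge {..<j} {j..<N} (x, y))"
    by (rule AE_PiM_merge[of "{..<j}" "{j..<N}", unfolded un, OF _ _ _ assms(3)]) auto
  then show ?thesis
    by eventually_elim (auto simp: marginal_eq_PiM intro!: nn_integral_cong_AE elim!: eventually_mono)
qed

lemma AE_marginal_eq_integral_marginal_Suc: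
  assumes "sigma_finite_measure M" "j < N" "P \<in> borel_measurable (prodc M N)"
  shows "AE x in Pi\<^sub>M {..<j} (\<lambda>_. M). marginal M N P j x = (\<integral>\<^sup>+ s. marginal M N P (Suc j) (x(j := s)) \<partial>M)"
proof -
  interpret product_sigma_finite "\<lambda>_. M"
    using assms(1) by (simp add: product_sigma_finite_def)
  obtain P' where P': "P' \<in> borel_measurable (Pi\<^sub>M {..<N} (\<lambda>_. M))"
    and P'_ae: "AE y in Pi\<^sub>M {..<N} (\<lambda>_. M). P y = P' y"
    using completion_ex_borel_measurable_real assms(3) unfolding prodc_def by blast
  have cong: "AE x in Pi\<^sub>M {..<k} (\<lambda>_. M). marginal M N P k x = marginal M N P' k x"
    if "k \<le> N" for k
    using AE_marginal_cong[OF assms(1) that P'_ae] .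
  have "AE x in Pi\<^sub>M {..<j} (\<lambda>_. M). AE s in M.
      marginal M N P (Suc j) (x(j := s)) = marginal M N P' (Suc j) (x(j := s))"
    using AE_PiM_insert_fun_upd[of "{..<j}" j, OF _ _ cong[of "Suc j", unfolded lessThan_Suc]] assms(2)
    by simp
  with cong[of j, OF less_imp_le[OF assms(2)]] AE_space show ?thesis
  proof eventually_elim
    case (elim x)
    then have "marginal M N P j x = marginal M N P' j x" by simp
    also have "\<dots> = (\<integral>\<^sup>+ s. marginal M N P' (Suc j) (x(j := s)) \<partial>M)"
      using elim by (intro marginal_eq_integral_marginal_Suc assms P') simp
    also have "\<dots> = (\<integral>\<^sup>+ s. marginal M N P (Suc j) (x(j := s)) \<partial>M)"
      using elim by (intro nn_integral_cong_AE) (auto elim!: eventually_mono)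
    finally show ?case .
  qed
qed

lemma AE_marginal_lower_bound_descend:
  fixes g :: "'a \<Rightarrow> ennreal"
  assumes M: "sigma_finite_measure M" and P: "sym_prob_density M N P" and kN: "Suc (Suc k) \<le> N"
    and bound: "AE x in Pi\<^sub>M {..<Suc (Suc k)} (\<lambda>_. M). x (Suc k) \<in> A \<longrightarrow>
      g (x (Suc k)) * marginal M N P (Suc k) x \<le> marginal M N P (Suc (Suc k)) x"
  shows "AE x in Pi\<^sub>M {..<Suc k} (\<lambda>_. M). x k \<in> A \<longrightarrow>
      g (x k) * marginal M N P k x \<le> marginal M N P (Suc k) x"
proof -
  interpret product_sigma_finite "\<lambda>_. M"
    using M by (simp add: product_sigma_finite_def)
  define \<tau> where "\<tau> = Transposition.transpose k (Suc k)"
  have \<tau>: "\<tau> permutes {..<Suc (Suc k)}"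
    unfolding \<tau>_def by (rule permutes_swap_id) auto
  have "AE x in Pi\<^sub>M {..<Suc (Suc k)} (\<lambda>_. M). x k \<in> A \<longrightarrow>
      g (x k) * marginal M N P (Suc k) (x(k := x (Suc k))) \<le> marginal M N P (Suc (Suc k)) x"
    using AE_PiM_comp_permutes[OF M finite_lessThan \<tau> bound] AE_space
  proof eventually_elim
    case (elim x)
    have "marginal M N P (Suc (Suc k)) (x \<circ> \<tau>) = marginal M N P (Suc (Suc k)) x"
      by (rule marginal_comp_permutes[OF P kN \<tau> elim(2)])
    moreover have "marginal M N P (Suc k) (x \<circ> \<tau>) = marginal M N P (Suc k) (x(k := x (Suc k)))"
      by (rule marginal_cong_prefix) (auto simp: \<tau>_def)
    ultimately show ?case
      using elim(1) by (simp add: \<tau>_def)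
  qed
  from AE_PiM_insert_fun_upd[OF finite_lessThan, of "Suc k" "Suc k", unfolded lessThan_Suc[symmetric], OF _ this]
  have swapped: "AE x in Pi\<^sub>M {..<Suc k} (\<lambda>_. M). AE s in M. x k \<in> A \<longrightarrow>
      g (x k) * marginal M N P (Suc k) (x(k := s)) \<le> marginal M N P (Suc (Suc k)) (x(Suc k := s))"
    using marginal_cong_prefix[of "Suc k" "x(Suc k := s, k := s)" "x(k := s)" M N P for x s] by simp
  have "AE x in Pi\<^sub>M {..<Suc k} (\<lambda>_. M).
      marginal M N P (Suc k) x = (\<integral>\<^sup>+ s. marginal M N P (Suc (Suc k)) (x(Suc k := s)) \<partial>M)"
    using P kN by (intro AE_marginal_eq_integral_marginal_Suc M) (auto simp: sym_prob_density_def)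
  with swapped show ?thesis
  proof eventually_elim
    case (elim x)
    show ?case
    proof
      assume "x k \<in> A"
      have "g (x k) * marginal M N P k x \<le> g (x k) * (\<integral>\<^sup>+ s. marginal M N P (Suc k) (x(k := s)) \<partial>M)"
        using kN by (intro mult_left_mono marginal_le_integral_marginal_Suc M) auto
      also have "\<dots> \<le> (\<integral>\<^sup>+ s. g (x k) * marginal M N P (Suc k) (x(k := s)) \<partial>M)"
        by (rule nn_integral_cmult_le)
      also have "\<dots> \<le> (\<integral>\<^sup>+ s. marginal M N P (Suc (Suc k)) (x(Suc k := s)) \<partial>M)"
        using elim(1) \<open>x k \<in> A\<close> by (intro nn_integral_mono_AE) (auto elim: eventually_mono)
      also have "\<dots> = marginal M N P (Suc k) x"
        using elim(2) by simp
      finally show "g (x k) * marginal M N P k x \<le> marginal M N P (Suc k) x" .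
    qed
  qed
qed

theorem lemma3:
  fixes M :: "'a measure" and N m :: nat and P :: "(nat \<Rightarrow> 'a) \<Rightarrow> real"
    and A :: "'a set" and \<gamma> :: "'a \<Rightarrow> real"
  assumes "sigma_finite_measure M" and "complete_measure M"
    and "emeasure M (space M) \<noteq> 0"
    and "2 \<le> N"
    and "sym_prob_density M N P"
    and "1 \<le> m" and "m \<le> N - 1"
    and "A \<in> sets M" and "emeasure M A > 0"
    and "\<gamma> \<in> borel_measurable (restrict_space M A)" and "\<forall>a\<in>A. \<gamma> a > 0"
    and "AE x in prodc M (Suc m). x m \<in> A \<longrightarrow>
           marginal M N P (Suc m) x \<ge> ennreal (\<gamma> (x m)) * marginal M N P m x"
  shows "AE x in prodc M m. x (m - 1) \<in> A \<longrightarrow>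
           marginal M N P m x \<ge> ennreal (\<gamma> (x (m - 1))) * marginal M N P (m - 1) x"
proof -
  obtain k where k: "m = Suc k"
    using assms(6) by (cases m) auto
  have "AE x in Pi\<^sub>M {..<Suc (Suc k)} (\<lambda>_. M). x (Suc k) \<in> A \<longrightarrow>
      ennreal (\<gamma> (x (Suc k))) * marginal M N P (Suc k) x \<le> marginal M N P (Suc (Suc k)) x"
    using assms(12) unfolding k prodc_def AE_completion_iff .
  from AE_marginal_lower_bound_descend[OF assms(1,5) _ this]
  have "AE x in Pi\<^sub>M {..<Suc k} (\<lambda>_. M). x k \<in> A \<longrightarrow>
      ennreal (\<gamma> (x k)) * marginal M N P k x \<le> marginal M N P (Suc k) x"
    using assms(4,7) k by simp
  then show ?thesis
    unfolding k prodc_def AE_completion_iff by simp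
qed

end
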